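(* Let $q$ be a prime power with $q\equiv 1\pmod 4$ and $5\mid(q-1)$, and let $n=1+\frac{q-1}{5}$. Then $C_5+C_n:=\{\alpha+\beta:\alpha\in C_5,\beta\in C_n\}\neq\mathbb{F}_q$. In fact, $|C_5+C_n|\le q-1$.
   Context: For a prime power $q$ and an integer $k>1$, an element $a\in\mathbb{F}_q$ is called a $k$-potent if $a^k=a$, and $C_k$ denotes the set of all $k$-potents in $\mathbb{F}_q$. *)

theory Defs
  imports Main
begin

definition kpotents :: "nat \<Rightarrow> 'a::field set" where
  "kpotents k = {a. a ^ k = a}"

definition sumset :: "'a::plus set \<Rightarrow> 'a set \<Rightarrow> 'a set" where
  "sumset A B = {x + y | x y. x \<in> A \<and> y \<in> B}"

end

theory Submission
  imports Defs "HOL-Computational_Algebra.Polynomial"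
begin

text \<open>
  Write \<open>q = 20 m + 1\<close>, so \<open>n = 4 m + 1\<close>. The nonzero 5-potents satisfy \<open>a\<^sup>4 = 1\<close>, hence are
  \<open>n\<close>-potents, and as \<open>n\<close> is odd so are their negatives. Therefore \<open>a + 0 = a\<close> and \<open>a + (-a) = 0\<close>
  already lie in \<open>C\<^sub>n\<close>, and each of the at most four nonzero \<open>a \<in> C\<^sub>5\<close> contributes at most
  \<open>|C\<^sub>n| - 2\<close> new sums. Since k-potents are roots of \<open>x\<^sup>k - x\<close>, \<open>|C\<^sub>k| \<le> k\<close>, which gives
  \<open>|C\<^sub>5 + C\<^sub>n| \<le> n + 4 (n - 2) = q - 3\<close>.
\<close>

lemma card_kpotents_le:
  assumes "k \<ge> 2"
  shows "card (kpotents k :: 'a::field set) \<le> k"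
proof -
  define p :: "'a poly" where "p = monom 1 k + [:0, -1:]"
  have "degree p = k"
    unfolding p_def using assms by (subst degree_add_eq_left) (auto simp: degree_monom_eq)
  with assms have "p \<noteq> 0" by auto
  have "kpotents k = {x. poly p x = 0}"
    by (auto simp: kpotents_def p_def poly_monom)
  with card_poly_roots_bound[OF \<open>p \<noteq> 0\<close>] \<open>degree p = k\<close> show ?thesis by simp
qed

lemma zero_mem_kpotents: "k \<noteq> 0 \<Longrightarrow> (0::'a::field) \<in> kpotents k"
  by (simp add: kpotents_def)

lemma uminus_mem_kpotents: "odd k \<Longrightarrow> a \<in> kpotents k \<Longrightarrow> - a \<in> kpotents k"
  by (simp add: kpotents_def)

lemma kpotents_subset_kpotents:
  assumes "(k - 1) dvd (l - 1)" "k \<noteq> 0" "l \<noteq> 0"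
  shows "(kpotents k :: 'a::field set) \<subseteq> kpotents l"
proof
  fix a :: 'a
  assume a: "a \<in> kpotents k"
  show "a \<in> kpotents l"
  proof (cases "a = 0")
    case True
    with assms(3) show ?thesis by (simp add: zero_mem_kpotents)
  next
    case False
    from a assms(2) have "a * a ^ (k - 1) = a * 1"
      by (simp add: kpotents_def power_Suc[symmetric])
    with False have unit: "a ^ (k - 1) = 1" by simp
    from assms(1) obtain j where "l - 1 = (k - 1) * j" by blast
    with assms(3) have "a ^ l = a * (a ^ (k - 1)) ^ j"
      by (metis Suc_pred' not_gr0 power_Suc power_mult)
    with unit show ?thesis by (simp add: kpotents_def)
  qed
qed

lemma sumset_subset_translates:
  fixes A B :: "'a::ab_group_add set"
  assumes "0 \<in> B" "A \<subseteq> B" "uminus ` A \<subseteq> B"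
  shows "sumset A B \<subseteq> B \<union> (\<Union>a\<in>A - {0}. (+) a ` (B - {0, - a}))"
proof
  fix s
  assume "s \<in> sumset A B"
  then obtain a b where s: "s = a + b" "a \<in> A" "b \<in> B"
    by (auto simp: sumset_def)
  consider "a = 0" | "b = 0" | "b = - a" | "a \<noteq> 0" "b \<notin> {0, - a}" by blast
  then show "s \<in> B \<union> (\<Union>a\<in>A - {0}. (+) a ` (B - {0, - a}))"
    by cases (use s assms in auto)
qed

lemma card_sumset_le:
  fixes A B :: "'a::ab_group_add set"
  assumes "finite A" "finite B" "0 \<in> A" "A \<subseteq> B" "uminus ` A \<subseteq> B"
  shows "card (sumset A B) \<le> card B + (card A - 1) * (card B - 2)"
proof -
  have translate: "card ((+) a ` (B - {0, - a})) = card B - 2" if "a \<in> A - {0}" for a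
  proof -
    from that assms(3-5) have "{0, - a} \<subseteq> B" "- a \<noteq> 0" by auto
    then have "card (B - {0, - a}) = card B - 2"
      using assms(2) by (simp add: card_Diff_subset)
    then show ?thesis by (simp add: card_image)
  qed
  have "card (sumset A B) \<le> card (B \<union> (\<Union>a\<in>A - {0}. (+) a ` (B - {0, - a})))"
    using assms by (intro card_mono sumset_subset_translates) auto
  also have "\<dots> \<le> card B + card (\<Union>a\<in>A - {0}. (+) a ` (B - {0, - a}))"
    by (rule card_Un_le)
  also have "card (\<Union>a\<in>A - {0}. (+) a ` (B - {0, - a}))
      \<le> (\<Sum>a\<in>A - {0}. card ((+) a ` (B - {0, - a})))"
    using assms(1) by (intro card_UN_le) simp
  also have "\<dots> = (\<Sum>a\<in>A - {0}. card B - 2)"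
    using translate by (rule sum.cong[OF refl])
  also have "\<dots> = (card A - 1) * (card B - 2)"
    using assms(1,3) by (simp add: card_Diff_singleton)
  finally show ?thesis by simp
qed

lemma card_field_ge_2: "card (UNIV :: 'a::{field,finite} set) \<ge> 2"
proof -
  have "card {0::'a, 1} \<le> card (UNIV :: 'a set)" by (rule card_mono) auto
  then show ?thesis by simp
qed

theorem mainTheorem4:
  fixes q n :: nat
  assumes "card (UNIV :: ('a::{field,finite}) set) = q"
    and "q mod 4 = 1"
    and "5 dvd (q - 1)"
    and "n = 1 + (q - 1) div 5"
  shows "sumset (kpotents 5 :: 'a set) (kpotents n) \<noteq> UNIV
         \<and> card (sumset (kpotents 5 :: 'a set) (kpotents n)) \<le> q - 1"
proof -
  have "q \<ge> 2" using assms(1) card_field_ge_2 by metis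
  then obtain m where q: "q = 20 * m + 1" and "m \<ge> 1"
  proof -
    from assms(2,3) \<open>q \<ge> 2\<close> have "20 dvd (q - 1)" by presburger
    then obtain m where "q - 1 = 20 * m" ..
    with \<open>q \<ge> 2\<close> show thesis by (intro that[of m]) auto
  qed
  with assms(4) have n: "n = 4 * m + 1" "n \<ge> 2" by simp_all
  let ?S = "sumset (kpotents 5 :: 'a set) (kpotents n)"
  have "kpotents 5 \<subseteq> (kpotents n :: 'a set)"
    using n by (intro kpotents_subset_kpotents) simp_all
  moreover have "uminus ` kpotents 5 \<subseteq> (kpotents n :: 'a set)"
    using calculation n by (auto intro: uminus_mem_kpotents)
  ultimately have "card ?S \<le> card (kpotents n :: 'a set)
      + (card (kpotents 5 :: 'a set) - 1) * (card (kpotents n :: 'a set) - 2)"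
    using n by (intro card_sumset_le) (simp_all add: zero_mem_kpotents)
  also have "\<dots> \<le> n + 4 * (n - 2)"
    using card_kpotents_le[of 5, where 'a='a] card_kpotents_le[OF \<open>n \<ge> 2\<close>, where 'a='a]
    by (intro add_mono mult_mono) auto
  also have "\<dots> \<le> q - 1"
    using n q by simp
  finally have "card ?S \<le> q - 1" .
  moreover from this have "?S \<noteq> UNIV"
    using assms(1) \<open>q \<ge> 2\<close> by auto
  ultimately show ?thesis by simp
qed

end
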